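(* Let $\mathbf Y_n=(\mathbf y_1,\dots,\mathbf y_n)=(y_{ij})$ have i.i.d. $N(0,1)$ entries and let $\boldsymbol\Gamma_n=(\gamma_{ij})$ be obtained by applying Gram–Schmidt to its columns ($\mathbf w_1=\mathbf y_1$, $\boldsymbol\gamma_1=\mathbf w_1/\|\mathbf w_1\|$, $\mathbf w_k=\mathbf y_k-\sum_{i<k}\langle\mathbf y_k,\boldsymbol\gamma_i\rangle\boldsymbol\gamma_i$, $\boldsymbol\gamma_k=\mathbf w_k/\|\mathbf w_k\|$). Let $p=p_n$ satisfy $p_n/n\to c$ for some $c\in(0,1]$. Then $$\Big(\sum_{i=1}^p(\sqrt n\gamma_{i1}-y_{i1})^2\Big)^{1/2}\to\sqrt{c/2}\,|N(0,1)|$$ weakly as $n\to\infty$. *)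

theory Defs
  imports "HOL-Probability.Probability"
begin

text \<open>Vectors in R^n are represented as functions nat => real, only indices < n matter
  (indices are 0-based: paper index i corresponds to i-1 here).\<close>

definition vinner :: "nat \<Rightarrow> (nat \<Rightarrow> real) \<Rightarrow> (nat \<Rightarrow> real) \<Rightarrow> real" where
  "vinner n u v = (\<Sum>i<n. u i * v i)"

definition vnorm :: "nat \<Rightarrow> (nat \<Rightarrow> real) \<Rightarrow> real" where
  "vnorm n u = sqrt (vinner n u u)"

fun gs_list :: "nat \<Rightarrow> (nat \<Rightarrow> nat \<Rightarrow> real) \<Rightarrow> nat \<Rightarrow> (nat \<Rightarrow> real) list" where
  "gs_list n Y 0 = []"
| "gs_list n Y (Suc k) =
     (let G = gs_list n Y k;
          yk = (\<lambda>i. Y i k);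
          w = (\<lambda>i. yk i - (\<Sum>g\<leftarrow>G. vinner n yk g * g i))
      in G @ [(\<lambda>i. w i / vnorm n w)])"

text \<open>gs_gamma n Y i k = entry gamma_{ik} of the Gram-Schmidt matrix Gamma_n (0-based).\<close>
definition gs_gamma :: "nat \<Rightarrow> (nat \<Rightarrow> nat \<Rightarrow> real) \<Rightarrow> nat \<Rightarrow> nat \<Rightarrow> real" where
  "gs_gamma n Y i k = (gs_list n Y (Suc k) ! k) i"

end

theory Submission
  imports Defs
begin

text \<open>
  Since \<open>\<gamma>\<^sub>1 = y\<^sub>1 / \<parallel>y\<^sub>1\<parallel>\<close>, the statistic equals
  \<open>\<bar>\<surd>n - \<parallel>y\<^sub>1\<parallel>\<bar> \<cdot> (\<Sum>i\<le>p. y\<^sub>i\<^sub>1\<^sup>2)\<^sup>1\<^sup>/\<^sup>2 / \<parallel>y\<^sub>1\<parallel>\<close>, and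
  \<open>\<surd>n - \<parallel>y\<^sub>1\<parallel> = (n - \<parallel>y\<^sub>1\<parallel>\<^sup>2) / (\<surd>n + \<parallel>y\<^sub>1\<parallel>)\<close>. So the statistic is
  \<open>\<bar>Z\<^sub>n\<bar> A\<^sub>n\<close>, where \<open>Z\<^sub>n = (\<Sum>i\<le>n. y\<^sub>i\<^sub>1\<^sup>2 - 1) / \<surd>(2n)\<close> converges weakly to
  \<open>N(0,1)\<close> by the central limit theorem for the centred \<open>\<chi>\<^sup>2\<close> variables (variance 2), while
  \<open>A\<^sub>n\<close> is a continuous function of \<open>(\<Sum>i\<le>p. y\<^sub>i\<^sub>1\<^sup>2) / n\<close> and \<open>\<parallel>y\<^sub>1\<parallel>\<^sup>2 / n\<close>, which tend
  to \<open>c\<close> and \<open>1\<close> in probability by the weak law of large numbers; hence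
  \<open>A\<^sub>n \<rightarrow> \<surd>(c/2)\<close> in probability. As \<open>Z\<^sub>n\<close> is bounded in probability, the difference
  \<open>\<bar>Z\<^sub>n\<bar> (A\<^sub>n - \<surd>(c/2))\<close> tends to \<open>0\<close> in probability, and Slutsky's lemma yields the
  limit \<open>\<surd>(c/2) \<bar>N(0,1)\<bar>\<close>.
\<close>

section \<open>Central limit theorem for triangular arrays\<close>

lemma (in prob_space) char_distr_row_sum:
  fixes X :: "nat \<Rightarrow> 'a \<Rightarrow> real"
  assumes indep: "indep_vars (\<lambda>_. borel) X {..<n}"
    and distr: "\<And>i. i < n \<Longrightarrow> distr M borel (X i) = \<mu>"
  shows "char (distr M borel (\<lambda>x. (\<Sum>i<n. X i x) / s)) t = char \<mu> (t / s) ^ n"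
proof -
  have [measurable]: "i < n \<Longrightarrow> random_variable borel (X i)" for i
    using indep unfolding indep_vars_def2 by simp
  have "char (distr M borel (\<lambda>x. \<Sum>i<n. X i x / s)) t = (\<Prod>i<n. char (distr M borel (\<lambda>x. X i x / s)) t)"
    by (intro char_distr_sum indep_vars_compose2[OF indep]) auto
  also have "\<dots> = (\<Prod>i<n. char \<mu> (t / s))"
    by (intro prod.cong refl) (auto simp: char_def integral_distr simp flip: distr)
  finally show ?thesis
    by (simp add: sum_divide_distrib)
qed

lemma (in real_distribution) char_power_approx:
  fixes \<sigma> :: real
  assumes square_integrable: "integrable M (\<lambda>x. x\<^sup>2)"
    and mean: "expectation (\<lambda>x. x) = 0"
    and variance: "expectation (\<lambda>x. x\<^sup>2) = \<sigma>\<^sup>2"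
    and \<sigma>: "\<sigma> > 0"
    and n: "n \<ge> t\<^sup>2 / 4"
  shows "cmod (char M (t / sqrt (\<sigma>\<^sup>2 * n)) ^ n - complex_of_real ((1 + (- t\<^sup>2 / 2) / n) ^ n))
    \<le> t\<^sup>2 / (6 * \<sigma>\<^sup>2) * expectation (\<lambda>x. min (6 * x\<^sup>2) (\<bar>t / sqrt (\<sigma>\<^sup>2 * n)\<bar> * \<bar>x\<bar> ^ 3))"
proof -
  let ?t = "t / sqrt (\<sigma>\<^sup>2 * n)"
  let ?E = "expectation (\<lambda>x. min (6 * x\<^sup>2) (\<bar>?t\<bar> * \<bar>x\<bar> ^ 3))"
  have "cmod (char M ?t - (1 - ?t ^ 2 * \<sigma>\<^sup>2 / 2)) \<le> ?t ^ 2 / 6 * ?E"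
    using square_integrable_imp_integrable[OF _ square_integrable] mean variance square_integrable
    by (intro char_approx3) auto
  moreover have "?t ^ 2 * \<sigma>\<^sup>2 / 2 = (t\<^sup>2 / 2) / n"
    using \<sigma> by (simp add: power_divide)
  ultimately have one: "cmod (char M ?t - (1 + (- t\<^sup>2 / 2) / n)) \<le> ?t ^ 2 / 6 * ?E"
    by simp
  have "cmod (char M ?t ^ n - complex_of_real (1 + (- t\<^sup>2 / 2) / n) ^ n)
      \<le> n * cmod (char M ?t - complex_of_real (1 + (- t\<^sup>2 / 2) / n))"
    using n
    by (auto intro!: norm_power_diff cmod_char_le_1 abs_leI
             simp del: of_real_diff simp: of_real_diff[symmetric] divide_le_eq)
  also have "\<dots> \<le> n * (?t ^ 2 / 6 * ?E)"
    by (rule mult_left_mono[OF one]) simp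
  also have "\<dots> = t\<^sup>2 / (6 * \<sigma>\<^sup>2) * ?E"
    using \<sigma> by (simp add: field_simps min_absorb2)
  finally show ?thesis
    by simp
qed

theorem (in prob_space) central_limit_theorem_triangular:
  fixes X :: "nat \<Rightarrow> nat \<Rightarrow> 'a \<Rightarrow> real" and \<sigma> :: real
  assumes indep: "\<And>n. indep_vars (\<lambda>_. borel) (X n) {..<n}"
    and distr: "\<And>n i. i < n \<Longrightarrow> distr M borel (X n i) = \<mu>"
    and \<mu>: "real_distribution \<mu>"
    and square_integrable: "integrable \<mu> (\<lambda>x. x\<^sup>2)"
    and mean: "integral\<^sup>L \<mu> (\<lambda>x. x) = 0"
    and variance: "integral\<^sup>L \<mu> (\<lambda>x. x\<^sup>2) = \<sigma>\<^sup>2"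
    and \<sigma>: "\<sigma> > 0"
  shows "weak_conv_m (\<lambda>n. distr M borel (\<lambda>x. (\<Sum>i<n. X n i x) / sqrt (n * \<sigma>\<^sup>2)))
           std_normal_distribution"
proof -
  interpret \<mu>: real_distribution \<mu> by (rule \<mu>)
  have [measurable]: "i < n \<Longrightarrow> random_variable borel (X n i)" for n i
    using indep[of n] unfolding indep_vars_def2 by simp
  show ?thesis
  proof (rule levy_continuity)
    fix t
    let ?t = "\<lambda>n. t / sqrt (\<sigma>\<^sup>2 * n)"
    define R where "R n = t\<^sup>2 / (6 * \<sigma>\<^sup>2) * (LINT x|\<mu>. min (6 * x\<^sup>2) (\<bar>?t n\<bar> * \<bar>x\<bar> ^ 3))" for n :: nat
    have approx: "cmod (char \<mu> (?t n) ^ n - complex_of_real ((1 + (- t\<^sup>2 / 2) / n) ^ n)) \<le> R n"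
      if "n \<ge> t\<^sup>2 / 4" for n :: nat
      unfolding R_def using square_integrable mean variance \<sigma> that by (rule \<mu>.char_power_approx)
    have "(\<lambda>n. min (6 * x\<^sup>2) (\<bar>?t n\<bar> * \<bar>x\<bar> ^ 3)) \<longlonglongrightarrow> 0" for x
      using \<sigma>
      by (auto simp: real_sqrt_mult min_absorb2
               intro!: tendsto_min[THEN tendsto_eq_rhs] sqrt_at_top[THEN filterlim_compose]
                       filterlim_tendsto_pos_mult_at_top filterlim_at_top_imp_at_infinity
                       tendsto_divide_0 filterlim_real_sequentially)
    then have "(\<lambda>n. LINT x|\<mu>. min (6 * x\<^sup>2) (\<bar>?t n\<bar> * \<bar>x\<bar> ^ 3)) \<longlonglongrightarrow> (LINT x|\<mu>. 0)"
      using square_integrable by (intro integral_dominated_convergence[where w = "\<lambda>x. 6 * x\<^sup>2"]) auto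
    then have R: "R \<longlonglongrightarrow> 0"
      unfolding R_def by (simp only: integral_zero tendsto_mult_right_zero)
    have "eventually (\<lambda>n. n \<ge> t\<^sup>2 / 4) sequentially"
      by (rule eventually_sequentiallyI[of "nat \<lceil>t\<^sup>2 / 4\<rceil>"]) simp
    then have "eventually (\<lambda>n. cmod (char \<mu> (?t n) ^ n - complex_of_real ((1 + (- t\<^sup>2 / 2) / n) ^ n)) \<le> R n) sequentially"
      by (rule eventually_mono) (rule approx)
    then have "(\<lambda>n. char \<mu> (?t n) ^ n - complex_of_real ((1 + (- t\<^sup>2 / 2) / n) ^ n)) \<longlonglongrightarrow> 0"
      using R by (rule Lim_null_comparison)
    moreover have "(\<lambda>n. complex_of_real ((1 + (- t\<^sup>2 / 2) / n) ^ n)) \<longlonglongrightarrow> exp (- t\<^sup>2 / 2)"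
      by (rule isCont_tendsto_compose[OF _ tendsto_exp_limit_sequentially]) auto
    ultimately have "(\<lambda>n. char \<mu> (?t n) ^ n) \<longlonglongrightarrow> exp (- t\<^sup>2 / 2)"
      by (rule Lim_transform[rotated])
    then show "(\<lambda>n. char (distr M borel (\<lambda>x. (\<Sum>i<n. X n i x) / sqrt (n * \<sigma>\<^sup>2))) t)
        \<longlonglongrightarrow> char std_normal_distribution t"
      by (simp add: char_distr_row_sum[OF indep distr] char_std_normal_distribution ac_simps)
  qed (auto intro!: real_distribution_distr real_dist_normal_dist)
qed

section \<open>Sums of independent centred variables\<close>

lemma (in prob_space) indep_sets_reindex:
  assumes indep: "indep_sets F I" and inj: "inj_on f J" and sub: "f ` J \<subseteq> I"
  shows "indep_sets (\<lambda>j. F (f j)) J"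
proof (rule indep_setsI)
  show "F (f j) \<subseteq> events" if "j \<in> J" for j
    using indep sub that unfolding indep_sets_def by auto
next
  fix K A assume K: "K \<subseteq> J" "K \<noteq> {}" "finite K" and A: "\<forall>j\<in>K. A j \<in> F (f j)"
  have injK: "inj_on f K"
    using inj K(1) by (rule inj_on_subset)
  define B where "B x = A (the_inv_into K f x)" for x
  have "prob (\<Inter>x\<in>f ` K. B x) = (\<Prod>x\<in>f ` K. prob (B x))"
    using K A sub by (intro indep_setsD[OF indep]) (auto simp: B_def the_inv_into_f_f[OF injK])
  then show "prob (\<Inter>j\<in>K. A j) = (\<Prod>j\<in>K. prob (A j))"
    by (simp add: B_def prod.reindex[OF injK] the_inv_into_f_f[OF injK] image_image)
qed

lemma (in prob_space) indep_vars_reindex: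
  assumes "indep_vars M' X I" "inj_on f J" "f ` J \<subseteq> I"
  shows "indep_vars (\<lambda>j. M' (f j)) (\<lambda>j. X (f j)) J"
  using assms indep_sets_reindex[OF _ assms(2,3), of "\<lambda>i. {X i -` A \<inter> space M |A. A \<in> sets (M' i)}"]
  unfolding indep_vars_def2 by auto

lemma (in prob_space)
  fixes W :: "'i \<Rightarrow> 'a \<Rightarrow> real"
  assumes indep: "indep_vars (\<lambda>_. borel) W I" and "finite I"
    and square_integrable: "\<And>i. i \<in> I \<Longrightarrow> integrable M (\<lambda>x. (W i x)\<^sup>2)"
    and mean: "\<And>i. i \<in> I \<Longrightarrow> expectation (W i) = 0"
  shows indep_vars_integrable_square_sum: "integrable M (\<lambda>x. (\<Sum>i\<in>I. W i x)\<^sup>2)"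
    and indep_vars_expectation_square_sum:
      "expectation (\<lambda>x. (\<Sum>i\<in>I. W i x)\<^sup>2) = (\<Sum>i\<in>I. expectation (\<lambda>x. (W i x)\<^sup>2))"
proof -
  have rv[measurable]: "i \<in> I \<Longrightarrow> random_variable borel (W i)" for i
    using indep unfolding indep_vars_def2 by auto
  have integrable: "i \<in> I \<Longrightarrow> integrable M (W i)" for i
    by (rule square_integrable_imp_integrable[OF rv square_integrable])
  have cross: "integrable M (\<lambda>x. W i x * W j x) \<and>
      expectation (\<lambda>x. W i x * W j x) = (if i = j then expectation (\<lambda>x. (W i x)\<^sup>2) else 0)"
    if "i \<in> I" "j \<in> I" for i j
  proof (cases "i = j")
    case True
    then show ?thesis
      using square_integrable[OF that(1)] by (simp add: power2_eq_square)
  next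
    case False
    have indep2: "indep_vars (\<lambda>_. borel) W {i, j}"
      using indep_vars_subset[OF indep] that by auto
    have "integrable M (\<lambda>x. \<Prod>k\<in>{i, j}. W k x)"
      using indep2 integrable that by (intro indep_vars_integrable) auto
    moreover have "expectation (\<lambda>x. \<Prod>k\<in>{i, j}. W k x) = (\<Prod>k\<in>{i, j}. expectation (W k))"
      using indep2 integrable that by (intro indep_vars_lebesgue_integral) auto
    ultimately show ?thesis
      using False mean that by simp
  qed
  have square_sum: "(\<Sum>i\<in>I. W i x)\<^sup>2 = (\<Sum>i\<in>I. \<Sum>j\<in>I. W i x * W j x)" for x
    by (simp add: power2_eq_square sum_product)
  show "integrable M (\<lambda>x. (\<Sum>i\<in>I. W i x)\<^sup>2)"
    unfolding square_sum using cross by (intro Bochner_Integration.integrable_sum) blast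
  have "expectation (\<lambda>x. (\<Sum>i\<in>I. W i x)\<^sup>2) = (\<Sum>i\<in>I. \<Sum>j\<in>I. expectation (\<lambda>x. W i x * W j x))"
    unfolding square_sum using cross
    by (subst Bochner_Integration.integral_sum) (auto intro!: sum.cong Bochner_Integration.integral_sum)
  also have "\<dots> = (\<Sum>i\<in>I. \<Sum>j\<in>I. if i = j then expectation (\<lambda>x. (W i x)\<^sup>2) else 0)"
    using cross by (intro sum.cong) auto
  also have "\<dots> = (\<Sum>i\<in>I. expectation (\<lambda>x. (W i x)\<^sup>2))"
    using \<open>finite I\<close> by simp
  finally show "expectation (\<lambda>x. (\<Sum>i\<in>I. W i x)\<^sup>2) = (\<Sum>i\<in>I. expectation (\<lambda>x. (W i x)\<^sup>2))" .
qed

lemma (in prob_space) Chebyshev_inequality_indep_sum: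
  fixes W :: "'i \<Rightarrow> 'a \<Rightarrow> real"
  assumes indep: "indep_vars (\<lambda>_. borel) W I" and "finite I"
    and square_integrable: "\<And>i. i \<in> I \<Longrightarrow> integrable M (\<lambda>x. (W i x)\<^sup>2)"
    and mean: "\<And>i. i \<in> I \<Longrightarrow> expectation (W i) = 0"
    and "t > 0"
  shows "prob {x \<in> space M. t \<le> \<bar>\<Sum>i\<in>I. W i x\<bar>} \<le> (\<Sum>i\<in>I. expectation (\<lambda>x. (W i x)\<^sup>2)) / t\<^sup>2"
proof -
  have rv[measurable]: "i \<in> I \<Longrightarrow> random_variable borel (W i)" for i
    using indep unfolding indep_vars_def2 by auto
  have "expectation (\<lambda>x. \<Sum>i\<in>I. W i x) = 0"
    using square_integrable_imp_integrable[OF rv square_integrable] mean by simp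
  moreover have "prob {x \<in> space M. t \<le> \<bar>(\<Sum>i\<in>I. W i x) - expectation (\<lambda>x. \<Sum>i\<in>I. W i x)\<bar>}
      \<le> variance (\<lambda>x. \<Sum>i\<in>I. W i x) / t\<^sup>2"
    using indep_vars_integrable_square_sum[OF assms(1-4)] \<open>t > 0\<close>
    by (intro Chebyshev_inequality) auto
  ultimately show ?thesis
    using indep_vars_expectation_square_sum[OF assms(1-4)] by simp
qed

section \<open>Convergence in probability and Slutsky's lemma\<close>

definition conv_in_prob :: "'a measure \<Rightarrow> (nat \<Rightarrow> 'a \<Rightarrow> real) \<Rightarrow> real \<Rightarrow> bool" where
  "conv_in_prob M U u \<longleftrightarrow> (\<forall>e>0. (\<lambda>n. measure M {x \<in> space M. e \<le> \<bar>U n x - u\<bar>}) \<longlonglongrightarrow> 0)"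

definition bounded_in_prob :: "'a measure \<Rightarrow> (nat \<Rightarrow> 'a \<Rightarrow> real) \<Rightarrow> bool" where
  "bounded_in_prob M Z \<longleftrightarrow> (\<forall>\<epsilon>>0. \<exists>K>0. \<forall>n. measure M {x \<in> space M. K \<le> \<bar>Z n x\<bar>} < \<epsilon>)"

lemma conv_in_prob_iff_eventually:
  "conv_in_prob M U u \<longleftrightarrow>
    (\<forall>e>0. \<forall>\<epsilon>>0. eventually (\<lambda>n. measure M {x \<in> space M. e \<le> \<bar>U n x - u\<bar>} < \<epsilon>) sequentially)"
  by (simp add: conv_in_prob_def tendsto_iff dist_real_def)

lemma conv_in_probD:
  "conv_in_prob M U u \<Longrightarrow> e > 0 \<Longrightarrow> \<epsilon> > 0 \<Longrightarrow>
    eventually (\<lambda>n. measure M {x \<in> space M. e \<le> \<bar>U n x - u\<bar>} < \<epsilon>) sequentially"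
  unfolding conv_in_prob_iff_eventually by blast

lemma (in prob_space) prob_le_subset_Un:
  assumes "A \<subseteq> B \<union> C" "B \<in> events" "C \<in> events"
  shows "prob A \<le> prob B + prob C"
proof (cases "A \<in> events")
  case True
  then have "prob A \<le> prob (B \<union> C)"
    using assms by (intro finite_measure_mono) auto
  also have "\<dots> \<le> prob B + prob C"
    using assms by (intro measure_Un_le) auto
  finally show ?thesis .
qed (simp add: measure_notin_sets)

lemma conv_in_prob_tendsto:
  assumes "f \<longlonglongrightarrow> u"
  shows "conv_in_prob M (\<lambda>n _. f n) u"
  unfolding conv_in_prob_iff_eventually
proof (intro allI impI)
  fix e \<epsilon> :: real assume "e > 0" "\<epsilon> > 0"
  show "eventually (\<lambda>n. measure M {x \<in> space M. e \<le> \<bar>f n - u\<bar>} < \<epsilon>) sequentially"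
    using tendstoD[OF assms \<open>e > 0\<close>] by eventually_elim (simp add: dist_real_def \<open>\<epsilon> > 0\<close>)
qed

lemma (in prob_space) conv_in_prob_continuous2:
  assumes U: "conv_in_prob M U u" and V: "conv_in_prob M V v"
    and g: "isCont (\<lambda>z. g (fst z) (snd z)) (u, v)"
    and [measurable]: "\<And>n. U n \<in> borel_measurable M" "\<And>n. V n \<in> borel_measurable M"
  shows "conv_in_prob M (\<lambda>n x. g (U n x) (V n x)) (g u v)"
  unfolding conv_in_prob_iff_eventually
proof (intro allI impI)
  fix e \<epsilon> :: real assume "e > 0" "\<epsilon> > 0"
  obtain d where "d > 0" and d: "\<And>z. dist z (u, v) < d \<Longrightarrow> dist (g (fst z) (snd z)) (g u v) < e"
    using g \<open>e > 0\<close> unfolding continuous_at_eps_delta by force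
  note half = half_gt_zero[OF \<open>d > 0\<close>] half_gt_zero[OF \<open>\<epsilon> > 0\<close>]
  from conv_in_probD[OF U half] conv_in_probD[OF V half]
  show "eventually (\<lambda>n. prob {x \<in> space M. e \<le> \<bar>g (U n x) (V n x) - g u v\<bar>} < \<epsilon>) sequentially"
  proof eventually_elim
    case (elim n)
    have "{x \<in> space M. e \<le> \<bar>g (U n x) (V n x) - g u v\<bar>} \<subseteq>
        {x \<in> space M. d / 2 \<le> \<bar>U n x - u\<bar>} \<union> {x \<in> space M. d / 2 \<le> \<bar>V n x - v\<bar>}"
    proof (rule subsetI, rule ccontr)
      fix x assume x: "x \<in> {x \<in> space M. e \<le> \<bar>g (U n x) (V n x) - g u v\<bar>}"
        and "x \<notin> {x \<in> space M. d / 2 \<le> \<bar>U n x - u\<bar>} \<union> {x \<in> space M. d / 2 \<le> \<bar>V n x - v\<bar>}"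
      then have "\<bar>U n x - u\<bar> < d / 2" "\<bar>V n x - v\<bar> < d / 2"
        by auto
      then have "dist (U n x, V n x) (u, v) < d"
        using sqrt_sum_squares_le_sum_abs[of "U n x - u" "V n x - v"]
        by (simp add: dist_Pair_Pair dist_real_def)
      then show False
        using d[of "(U n x, V n x)"] x by (simp add: dist_real_def)
    qed
    then have "prob {x \<in> space M. e \<le> \<bar>g (U n x) (V n x) - g u v\<bar>} \<le>
        prob {x \<in> space M. d / 2 \<le> \<bar>U n x - u\<bar>} + prob {x \<in> space M. d / 2 \<le> \<bar>V n x - v\<bar>}"
      by (rule prob_le_subset_Un) measurable
    then show ?case
      using elim by simp
  qed
qed

lemma (in prob_space) conv_in_prob_mult_bounded:
  assumes Z: "bounded_in_prob M Z" and B: "conv_in_prob M B b"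
    and [measurable]: "\<And>n. Z n \<in> borel_measurable M" "\<And>n. B n \<in> borel_measurable M"
  shows "conv_in_prob M (\<lambda>n x. Z n x * (B n x - b)) 0"
  unfolding conv_in_prob_iff_eventually
proof (intro allI impI)
  fix e \<epsilon> :: real assume "e > 0" "\<epsilon> > 0"
  obtain K where "K > 0" and K: "\<And>n. prob {x \<in> space M. K \<le> \<bar>Z n x\<bar>} < \<epsilon> / 2"
    using Z \<open>\<epsilon> > 0\<close> unfolding bounded_in_prob_def by (meson half_gt_zero)
  from conv_in_probD[OF B divide_pos_pos[OF \<open>e > 0\<close> \<open>K > 0\<close>] half_gt_zero[OF \<open>\<epsilon> > 0\<close>]]
  show "eventually (\<lambda>n. prob {x \<in> space M. e \<le> \<bar>Z n x * (B n x - b) - 0\<bar>} < \<epsilon>) sequentially"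
  proof eventually_elim
    case (elim n)
    have "{x \<in> space M. e \<le> \<bar>Z n x * (B n x - b) - 0\<bar>} \<subseteq>
        {x \<in> space M. K \<le> \<bar>Z n x\<bar>} \<union> {x \<in> space M. e / K \<le> \<bar>B n x - b\<bar>}"
    proof (rule subsetI, rule ccontr)
      fix x assume x: "x \<in> {x \<in> space M. e \<le> \<bar>Z n x * (B n x - b) - 0\<bar>}"
        and "x \<notin> {x \<in> space M. K \<le> \<bar>Z n x\<bar>} \<union> {x \<in> space M. e / K \<le> \<bar>B n x - b\<bar>}"
      then have "\<bar>Z n x\<bar> < K" "\<bar>B n x - b\<bar> < e / K"
        by auto
      then have "\<bar>Z n x\<bar> * \<bar>B n x - b\<bar> < K * (e / K)"
        by (intro mult_strict_mono') auto
      then show False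
        using x \<open>K > 0\<close> by (simp add: abs_mult)
    qed
    then have "prob {x \<in> space M. e \<le> \<bar>Z n x * (B n x - b) - 0\<bar>} \<le>
        prob {x \<in> space M. K \<le> \<bar>Z n x\<bar>} + prob {x \<in> space M. e / K \<le> \<bar>B n x - b\<bar>}"
      by (rule prob_le_subset_Un) measurable
    then show ?case
      using elim K[of n] by simp
  qed
qed

lemma weak_conv_m_distr_continuous:
  assumes "\<And>n. real_distribution (\<mu>s n)" "real_distribution \<mu>" "weak_conv_m \<mu>s \<mu>"
    and g: "\<And>x. isCont g x"
  shows "weak_conv_m (\<lambda>n. distr (\<mu>s n) borel g) (distr \<mu> borel g)"
proof -
  have g_borel: "g \<in> borel_measurable borel"
    using g by (intro borel_measurable_continuous_onI continuous_at_imp_continuous_on) auto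
  have g_measurable: "g \<in> borel_measurable (\<mu>s n)" "g \<in> borel_measurable \<mu>" for n
    using assms(1,2) g_borel by (simp_all add: real_distribution.events_eq_borel cong: measurable_cong_sets)
  show ?thesis
  proof (rule integral_bdd_continuous_conv_imp_weak_conv)
    fix f :: "real \<Rightarrow> real" assume f: "\<And>x. isCont f x" "\<And>x. \<bar>f x\<bar> \<le> 1"
    then have [measurable]: "f \<in> borel_measurable borel"
      by (intro borel_measurable_continuous_onI continuous_at_imp_continuous_on) auto
    have "(\<lambda>n. integral\<^sup>L (\<mu>s n) (\<lambda>x. f (g x))) \<longlonglongrightarrow> integral\<^sup>L \<mu> (\<lambda>x. f (g x))"
      using assms f by (intro weak_conv_imp_integral_bdd_continuous_conv[where B = 1]) 
                       (auto intro: isCont_o2)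
    then show "(\<lambda>n. integral\<^sup>L (distr (\<mu>s n) borel g) f) \<longlonglongrightarrow> integral\<^sup>L (distr \<mu> borel g) f"
      using g_measurable by (simp add: integral_distr)
  qed (use assms g_measurable in \<open>auto intro: prob_space.real_distribution_distr real_distribution.axioms\<close>)
qed

lemma cts_step_bounds: "a < b \<Longrightarrow> 0 \<le> cts_step a b x \<and> cts_step a b x \<le> 1"
  by (auto simp: cts_step_def divide_simps)

lemma (in prob_space) abs_expectation_diff_le:
  fixes f :: "real \<Rightarrow> real"
  assumes [measurable]: "f \<in> borel_measurable borel" "U \<in> borel_measurable M" "V \<in> borel_measurable M"
    and f_bounds: "\<And>z. 0 \<le> f z" "\<And>z. f z \<le> 1"
    and "d > 0" and modulus: "\<And>z z'. \<bar>z' - z\<bar> < d \<Longrightarrow> \<bar>f z' - f z\<bar> \<le> \<eta>"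
  shows "\<bar>expectation (\<lambda>x. f (V x)) - expectation (\<lambda>x. f (U x))\<bar>
    \<le> \<eta> + prob {x \<in> space M. d \<le> \<bar>V x - U x\<bar>}"
proof -
  define S where "S = {x \<in> space M. d \<le> \<bar>V x - U x\<bar>}"
  have S[measurable]: "S \<in> events"
    unfolding S_def by measurable
  have integrable_f: "integrable M (\<lambda>x. f (W x))" if [measurable]: "W \<in> borel_measurable M" for W
    using f_bounds by (intro integrable_const_bound[where B = 1]) auto
  have integrable_S: "integrable M (indicator S :: 'a \<Rightarrow> real)"
    using S by (intro integrable_real_indicator) (auto simp: less_top[symmetric])
  have pointwise: "\<bar>f (V x) - f (U x)\<bar> \<le> \<eta> + indicator S x" if "x \<in> space M" for x
  proof (cases "x \<in> S")
    case True
    then show ?thesis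
      using f_bounds[of "V x"] f_bounds[of "U x"] modulus[of "U x" "U x"] \<open>d > 0\<close> by auto
  next
    case False
    then show ?thesis
      using modulus[of "V x" "U x"] that by (auto simp: S_def)
  qed
  have "\<bar>expectation (\<lambda>x. f (V x)) - expectation (\<lambda>x. f (U x))\<bar>
      = \<bar>expectation (\<lambda>x. f (V x) - f (U x))\<bar>"
    using integrable_f by simp
  also have "\<dots> \<le> expectation (\<lambda>x. \<bar>f (V x) - f (U x)\<bar>)"
    by (rule integral_abs_bound)
  also have "\<dots> \<le> expectation (\<lambda>x. \<eta> + indicator S x)"
    using pointwise integrable_f integrable_S by (intro integral_mono) auto
  also have "\<dots> = \<eta> + prob S"
    using integrable_S by (simp add: prob_space)
  finally show ?thesis
    by (simp add: S_def)
qed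

lemma (in prob_space) weak_conv_m_conv_in_prob_diff:
  assumes [measurable]: "\<And>n. U n \<in> borel_measurable M" "\<And>n. V n \<in> borel_measurable M"
    and \<mu>: "real_distribution \<mu>"
    and U: "weak_conv_m (\<lambda>n. distr M borel (U n)) \<mu>"
    and diff: "conv_in_prob M (\<lambda>n x. V n x - U n x) 0"
  shows "weak_conv_m (\<lambda>n. distr M borel (V n)) \<mu>"
proof (rule integral_cts_step_conv_imp_weak_conv)
  fix a b :: real assume "a < b"
  define f where "f = cts_step a b"
  have f_bounds: "0 \<le> f z" "f z \<le> 1" for z
    using cts_step_bounds[OF \<open>a < b\<close>] by (auto simp: f_def)
  have f_uc: "uniformly_continuous_on UNIV f"
    unfolding f_def using \<open>a < b\<close> by (rule cts_step_uniformly_continuous)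
  then have [measurable]: "f \<in> borel_measurable borel"
    by (intro borel_measurable_continuous_onI uniformly_continuous_imp_continuous)
  have "(\<lambda>n. integral\<^sup>L (distr M borel (U n)) f) \<longlonglongrightarrow> integral\<^sup>L \<mu> f"
    using \<mu> U f_uc f_bounds
    by (intro weak_conv_imp_integral_bdd_continuous_conv[where B = 1])
       (auto intro!: real_distribution_distr simp: isUCont_isCont)
  then have EU: "(\<lambda>n. expectation (\<lambda>x. f (U n x))) \<longlonglongrightarrow> integral\<^sup>L \<mu> f"
    by (simp add: integral_distr)
  have "(\<lambda>n. expectation (\<lambda>x. f (V n x)) - expectation (\<lambda>x. f (U n x))) \<longlonglongrightarrow> 0"
  proof (rule tendstoI)
    fix \<epsilon> :: real assume "\<epsilon> > 0"
    obtain d where "d > 0" and d: "\<And>z z'. dist z' z < d \<Longrightarrow> dist (f z') (f z) < \<epsilon> / 2"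
      using f_uc half_gt_zero[OF \<open>\<epsilon> > 0\<close>] unfolding uniformly_continuous_on_def by blast
    have bound: "\<bar>expectation (\<lambda>x. f (V n x)) - expectation (\<lambda>x. f (U n x))\<bar>
        \<le> \<epsilon> / 2 + prob {x \<in> space M. d \<le> \<bar>V n x - U n x\<bar>}" for n
      using d \<open>d > 0\<close> by (intro abs_expectation_diff_le f_bounds) (auto simp: dist_real_def less_imp_le)
    from conv_in_probD[OF diff \<open>d > 0\<close> half_gt_zero[OF \<open>\<epsilon> > 0\<close>]]
    show "eventually (\<lambda>n. dist (expectation (\<lambda>x. f (V n x)) - expectation (\<lambda>x. f (U n x))) 0 < \<epsilon>) sequentially"
    proof eventually_elim
      case (elim n)
      then show ?case
        using bound[of n] by (simp add: dist_real_def)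
    qed
  qed
  from Lim_transform[OF EU this]
  show "(\<lambda>n. integral\<^sup>L (distr M borel (V n)) (cts_step a b)) \<longlonglongrightarrow> integral\<^sup>L \<mu> (cts_step a b)"
    unfolding f_def[symmetric] by (simp add: integral_distr)
qed (use \<mu> in \<open>auto intro: real_distribution_distr\<close>)

lemma (in prob_space) weak_conv_m_abs_mult_conv_in_prob:
  fixes Z A :: "nat \<Rightarrow> 'a \<Rightarrow> real"
  assumes [measurable]: "\<And>n. Z n \<in> borel_measurable M" "\<And>n. A n \<in> borel_measurable M"
    and \<mu>: "real_distribution \<mu>"
    and Z: "weak_conv_m (\<lambda>n. distr M borel (Z n)) \<mu>" "bounded_in_prob M Z"
    and A: "conv_in_prob M A a"
  shows "weak_conv_m (\<lambda>n. distr M borel (\<lambda>x. \<bar>Z n x\<bar> * A n x)) (distr \<mu> borel (\<lambda>z. a * \<bar>z\<bar>))"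
proof (rule weak_conv_m_conv_in_prob_diff)
  have "weak_conv_m (\<lambda>n. distr (distr M borel (Z n)) borel (\<lambda>z. a * \<bar>z\<bar>)) (distr \<mu> borel (\<lambda>z. a * \<bar>z\<bar>))"
    by (rule weak_conv_m_distr_continuous[OF _ \<mu> Z(1)]) (auto intro!: real_distribution_distr continuous_intros)
  then show "weak_conv_m (\<lambda>n. distr M borel (\<lambda>x. a * \<bar>Z n x\<bar>)) (distr \<mu> borel (\<lambda>z. a * \<bar>z\<bar>))"
    by (simp add: distr_distr comp_def)
  have "bounded_in_prob M (\<lambda>n x. \<bar>Z n x\<bar>)"
    using Z(2) by (simp add: bounded_in_prob_def)
  then have "conv_in_prob M (\<lambda>n x. \<bar>Z n x\<bar> * (A n x - a)) 0"
    by (rule conv_in_prob_mult_bounded[OF _ A]) (auto intro: borel_measurable_abs)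
  then show "conv_in_prob M (\<lambda>n x. \<bar>Z n x\<bar> * A n x - a * \<bar>Z n x\<bar>) 0"
    by (simp add: algebra_simps)
  have "(\<lambda>z. a * \<bar>z\<bar>) \<in> borel_measurable \<mu>"
    unfolding measurable_cong_sets[OF real_distribution.events_eq_borel[OF \<mu>] refl] by measurable
  with \<mu> show "real_distribution (distr \<mu> borel (\<lambda>z. a * \<bar>z\<bar>))"
    by (intro prob_space.real_distribution_distr) (simp_all add: real_distribution_def)
qed (auto intro!: borel_measurable_times borel_measurable_abs)

section \<open>The first column of the Gram-Schmidt matrix\<close>

lemma sqrt_first_column_deviation_eq:
  fixes x :: "nat \<Rightarrow> real"
  assumes "p \<le> n"
  shows "sqrt (\<Sum>i<p. (sqrt n * (x i / sqrt (\<Sum>j<n. (x j)\<^sup>2)) - x i)\<^sup>2) =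
    \<bar>(\<Sum>i<n. (x i)\<^sup>2 - 1) / sqrt (2 * real n)\<bar> *
      (sqrt 2 * sqrt ((\<Sum>i<p. (x i)\<^sup>2) / n) /
        (sqrt ((\<Sum>j<n. (x j)\<^sup>2) / n) * (1 + sqrt ((\<Sum>j<n. (x j)\<^sup>2) / n))))"
proof -
  define P where "P = (\<Sum>i<p. (x i)\<^sup>2)"
  define R where "R = sqrt (\<Sum>j<n. (x j)\<^sup>2)"
  define s where "s = sqrt n"
  have "P \<ge> 0" "R \<ge> 0" "s \<ge> 0"
    by (auto simp: P_def R_def s_def sum_nonneg)
  have sum_eq: "(\<Sum>j<n. (x j)\<^sup>2) = R\<^sup>2" "(\<Sum>i<n. (x i)\<^sup>2 - 1) = R\<^sup>2 - s\<^sup>2" "real n = s\<^sup>2"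
    by (auto simp: R_def s_def sum_subtractf sum_nonneg)
  have lhs: "(\<Sum>i<p. (s * (x i / R) - x i)\<^sup>2) = P * (s / R - 1)\<^sup>2"
    unfolding P_def sum_distrib_right by (intro sum.cong refl) (simp add: power2_eq_square field_simps)
  show ?thesis
  proof (cases "R = 0")
    case True
    then have "x j = 0" if "j < n" for j
      using that sum_nonneg_eq_0_iff[of "{..<n}" "\<lambda>j. (x j)\<^sup>2"] by (auto simp: R_def)
    then have "P = 0"
      using assms by (auto simp: P_def)
    then show ?thesis
      using lhs True by (simp add: sum_eq flip: P_def R_def s_def)
  next
    case False
    then have "n > 0"
      by (cases n) (auto simp: R_def)
    then have "R > 0" "s > 0"
      using False \<open>R \<ge> 0\<close> by (auto simp: s_def)
    have "R\<^sup>2 - s\<^sup>2 = (R - s) * (s + R)"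
      by (simp add: power2_eq_square algebra_simps)
    then have "\<bar>R\<^sup>2 - s\<^sup>2\<bar> = \<bar>s - R\<bar> * (s + R)"
      using \<open>R > 0\<close> \<open>s > 0\<close> by (simp add: abs_mult abs_minus_commute)
    then have "sqrt (P * (s / R - 1)\<^sup>2) =
        \<bar>(R\<^sup>2 - s\<^sup>2) / sqrt (2 * s\<^sup>2)\<bar> *
          (sqrt 2 * sqrt (P / s\<^sup>2) / (sqrt (R\<^sup>2 / s\<^sup>2) * (1 + sqrt (R\<^sup>2 / s\<^sup>2))))"
      using \<open>R > 0\<close> \<open>s > 0\<close> \<open>P \<ge> 0\<close>
      by (simp add: real_sqrt_mult real_sqrt_divide abs_div divide_simps)
    then show ?thesis
      unfolding R_def[symmetric] s_def[symmetric] P_def[symmetric] unfolding sum_eq lhs .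
  qed
qed

locale std_normal_array = prob_space +
  fixes X :: "nat \<Rightarrow> nat \<Rightarrow> 'a \<Rightarrow> real"
  assumes indep: "\<And>n. indep_vars (\<lambda>_. borel) (X n) {..<n}"
    and std_normal: "\<And>n i. i < n \<Longrightarrow> distr M borel (X n i) = std_normal_distribution"
begin

lemma random_variable [measurable]: "i < n \<Longrightarrow> random_variable borel (X n i)"
  using indep[of n] unfolding indep_vars_def2 by simp

lemma
  assumes "i < n"
  shows integrable_X_power: "integrable M (\<lambda>x. X n i x ^ k)"
    and expectation_X_power: "expectation (\<lambda>x. X n i x ^ k) = (LINT z|std_normal_distribution. z ^ k)"
proof -
  have "integrable (distr M borel (X n i)) (\<lambda>z. z ^ k)"
    using std_normal[OF assms] by (simp add: integrable_std_normal_distribution_moment)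
  then show "integrable M (\<lambda>x. X n i x ^ k)"
    using assms by (subst (asm) integrable_distr_eq) auto
  show "expectation (\<lambda>x. X n i x ^ k) = (LINT z|std_normal_distribution. z ^ k)"
    using assms by (simp flip: std_normal[OF assms] add: integral_distr)
qed

lemma
  assumes "i < n"
  shows integrable_centered_square_sq: "integrable M (\<lambda>x. ((X n i x)\<^sup>2 - 1)\<^sup>2)"
    and expectation_centered_square: "expectation (\<lambda>x. (X n i x)\<^sup>2 - 1) = 0"
    and expectation_centered_square_sq: "expectation (\<lambda>x. ((X n i x)\<^sup>2 - 1)\<^sup>2) = 2"
proof -
  have expand: "((X n i x)\<^sup>2 - 1)\<^sup>2 = X n i x ^ 4 - 2 * X n i x ^ 2 + 1" for x
    by (simp add: power2_diff flip: power_mult)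
  have "(LINT z|std_normal_distribution. z ^ 2) = 1" "(LINT z|std_normal_distribution. z ^ 4) = 3"
    using std_normal_distribution_even_moments(1)[of 1] std_normal_distribution_even_moments(1)[of 2]
    by (simp_all add: fact_numeral)
  note moments = this integrable_X_power[OF assms] expectation_X_power[OF assms]
  show "integrable M (\<lambda>x. ((X n i x)\<^sup>2 - 1)\<^sup>2)"
    unfolding expand using moments by auto
  show "expectation (\<lambda>x. (X n i x)\<^sup>2 - 1) = 0"
    using moments by (simp add: prob_space)
  show "expectation (\<lambda>x. ((X n i x)\<^sup>2 - 1)\<^sup>2) = 2"
    unfolding expand using moments by (simp add: prob_space)
qed

lemma indep_centered_square: "indep_vars (\<lambda>_. borel) (\<lambda>i x. (X n i x)\<^sup>2 - 1) {..<n}"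
  by (rule indep_vars_compose2[OF indep]) auto

lemma prob_centered_square_sum_ge:
  assumes "k \<le> n" "t > 0"
  shows "prob {x \<in> space M. t \<le> \<bar>\<Sum>i<k. (X n i x)\<^sup>2 - 1\<bar>} \<le> 2 * real k / t\<^sup>2"
proof -
  have "prob {x \<in> space M. t \<le> \<bar>\<Sum>i<k. (X n i x)\<^sup>2 - 1\<bar>}
      \<le> (\<Sum>i<k. expectation (\<lambda>x. ((X n i x)\<^sup>2 - 1)\<^sup>2)) / t\<^sup>2"
    using assms
    by (intro Chebyshev_inequality_indep_sum indep_vars_subset[OF indep_centered_square]
              integrable_centered_square_sq expectation_centered_square) auto
  also have "(\<Sum>i<k. expectation (\<lambda>x. ((X n i x)\<^sup>2 - 1)\<^sup>2)) = 2 * real k"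
    using assms by (simp add: expectation_centered_square_sq)
  finally show ?thesis .
qed

lemma central_limit_centered_square:
  "weak_conv_m (\<lambda>n. distr M borel (\<lambda>x. (\<Sum>i<n. (X n i x)\<^sup>2 - 1) / sqrt (2 * real n)))
     std_normal_distribution"
proof -
  define \<mu> where "\<mu> = distr M borel (\<lambda>x. (X 1 0 x)\<^sup>2 - 1)"
  have distr_centered_square: "distr M borel (\<lambda>x. (X n i x)\<^sup>2 - 1) = \<mu>" if "i < n" for n i
  proof -
    have "distr M borel (\<lambda>x. (X n i x)\<^sup>2 - 1) = distr (distr M borel (X n i)) borel (\<lambda>z. z\<^sup>2 - 1)"
      using that by (subst distr_distr) (auto simp: comp_def)
    also have "\<dots> = distr (distr M borel (X 1 0)) borel (\<lambda>z. z\<^sup>2 - 1)"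
      using std_normal[OF that] std_normal[of 0 1] by simp
    finally show ?thesis
      by (subst (asm) distr_distr) (auto simp: comp_def \<mu>_def)
  qed
  have "weak_conv_m (\<lambda>n. distr M borel (\<lambda>x. (\<Sum>i<n. (X n i x)\<^sup>2 - 1) / sqrt (n * (sqrt 2)\<^sup>2)))
      std_normal_distribution"
  proof (rule central_limit_theorem_triangular[OF indep_centered_square distr_centered_square])
    show "real_distribution \<mu>"
      unfolding \<mu>_def by (rule real_distribution_distr) simp
    show "integrable \<mu> (\<lambda>z. z\<^sup>2)"
      unfolding \<mu>_def using integrable_centered_square_sq[of 0 1] by (subst integrable_distr_eq) auto
    show "integral\<^sup>L \<mu> (\<lambda>z. z) = 0"
      unfolding \<mu>_def using expectation_centered_square[of 0 1] by (subst integral_distr) auto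
    show "integral\<^sup>L \<mu> (\<lambda>z. z\<^sup>2) = (sqrt 2)\<^sup>2"
      unfolding \<mu>_def using expectation_centered_square_sq[of 0 1] by (subst integral_distr) auto
  qed auto
  then show ?thesis
    by (simp add: mult.commute)
qed

lemma bounded_in_prob_centered_square_sum:
  "bounded_in_prob M (\<lambda>n x. (\<Sum>i<n. (X n i x)\<^sup>2 - 1) / sqrt (2 * real n))"
  unfolding bounded_in_prob_def
proof (intro allI impI)
  fix \<epsilon> :: real assume "\<epsilon> > 0"
  define K where "K = sqrt (2 / \<epsilon>)"
  have "K > 0"
    using \<open>\<epsilon> > 0\<close> by (simp add: K_def)
  have "prob {x \<in> space M. K \<le> \<bar>(\<Sum>i<n. (X n i x)\<^sup>2 - 1) / sqrt (2 * real n)\<bar>} < \<epsilon>" for n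
  proof (cases "n = 0")
    case False
    then have "{x \<in> space M. K \<le> \<bar>(\<Sum>i<n. (X n i x)\<^sup>2 - 1) / sqrt (2 * real n)\<bar>} =
        {x \<in> space M. K * sqrt (2 * real n) \<le> \<bar>\<Sum>i<n. (X n i x)\<^sup>2 - 1\<bar>}"
      by (auto simp: abs_div le_divide_eq)
    also have "prob \<dots> \<le> 2 * real n / (K * sqrt (2 * real n))\<^sup>2"
      using False \<open>K > 0\<close> by (intro prob_centered_square_sum_ge) auto
    also have "\<dots> = \<epsilon> / 2"
      using False \<open>\<epsilon> > 0\<close> by (simp add: K_def power_mult_distrib)
    finally show ?thesis
      using \<open>\<epsilon> > 0\<close> by simp
  qed (use \<open>K > 0\<close> \<open>\<epsilon> > 0\<close> in simp)
  with \<open>K > 0\<close>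
  show "\<exists>K>0. \<forall>n. prob {x \<in> space M. K \<le> \<bar>(\<Sum>i<n. (X n i x)\<^sup>2 - 1) / sqrt (2 * real n)\<bar>} < \<epsilon>"
    by blast
qed

lemma conv_in_prob_mean_square:
  assumes k: "\<And>n. k n \<le> n" and lim: "(\<lambda>n. real (k n) / real n) \<longlonglongrightarrow> c"
  shows "conv_in_prob M (\<lambda>n x. (\<Sum>i<k n. (X n i x)\<^sup>2) / real n) c"
proof -
  have [measurable]: "i < k n \<Longrightarrow> random_variable borel (X n i)" for n i
    using k[of n] by simp
  have "conv_in_prob M (\<lambda>n x. (\<Sum>i<k n. (X n i x)\<^sup>2 - 1) / real n) 0"
    unfolding conv_in_prob_def
  proof (intro allI impI)
    fix e :: real assume "e > 0"
    have "eventually (\<lambda>n. norm (prob {x \<in> space M. e \<le> \<bar>(\<Sum>i<k n. (X n i x)\<^sup>2 - 1) / real n - 0\<bar>})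
        \<le> 2 / e\<^sup>2 * inverse (real n)) sequentially"
      using eventually_gt_at_top[of 0]
    proof eventually_elim
      case (elim n)
      have "{x \<in> space M. e \<le> \<bar>(\<Sum>i<k n. (X n i x)\<^sup>2 - 1) / real n - 0\<bar>} =
          {x \<in> space M. e * n \<le> \<bar>\<Sum>i<k n. (X n i x)\<^sup>2 - 1\<bar>}"
        using elim by (auto simp: abs_div le_divide_eq)
      also have "prob \<dots> \<le> 2 * real (k n) / (e * n)\<^sup>2"
        using k[of n] \<open>e > 0\<close> elim by (intro prob_centered_square_sum_ge) auto
      also have "\<dots> \<le> 2 * real n / (e * n)\<^sup>2"
        using k[of n] by (intro divide_right_mono) auto
      also have "\<dots> = 2 / e\<^sup>2 * inverse (real n)"
        using elim \<open>e > 0\<close> by (simp add: field_simps power2_eq_square)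
      finally show ?case
        by simp
    qed
    moreover have "(\<lambda>n. 2 / e\<^sup>2 * inverse (real n)) \<longlonglongrightarrow> 0"
      by (intro tendsto_mult_right_zero lim_inverse_n)
    ultimately show "(\<lambda>n. prob {x \<in> space M. e \<le> \<bar>(\<Sum>i<k n. (X n i x)\<^sup>2 - 1) / real n - 0\<bar>}) \<longlonglongrightarrow> 0"
      by (rule Lim_null_comparison)
  qed
  then have "conv_in_prob M (\<lambda>n x. (\<Sum>i<k n. (X n i x)\<^sup>2 - 1) / real n + real (k n) / real n) (0 + c)"
    using conv_in_prob_tendsto[OF lim]
    by (intro conv_in_prob_continuous2[where g = "(+)"]) (auto intro: continuous_intros)
  then show ?thesis
    by (simp add: sum_subtractf diff_divide_distrib)
qed

theorem weak_conv_first_column_deviation: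
  assumes p: "\<And>n. p n \<le> n" and lim: "(\<lambda>n. real (p n) / real n) \<longlonglongrightarrow> c"
  shows "weak_conv_m
    (\<lambda>n. distr M borel (\<lambda>x. sqrt (\<Sum>i<p n. (sqrt n * (X n i x / sqrt (\<Sum>j<n. (X n j x)\<^sup>2)) - X n i x)\<^sup>2)))
    (distr std_normal_distribution borel (\<lambda>z. sqrt (c / 2) * \<bar>z\<bar>))"
proof -
  have [measurable]: "i < p n \<Longrightarrow> random_variable borel (X n i)" for n i
    using p[of n] by simp
  define Z where "Z n x = (\<Sum>i<n. (X n i x)\<^sup>2 - 1) / sqrt (2 * real n)" for n x
  define g where "g u v = sqrt 2 * sqrt u / (sqrt v * (1 + sqrt v))" for u v :: real
  define A where "A n x = g ((\<Sum>i<p n. (X n i x)\<^sup>2) / n) ((\<Sum>i<n. (X n i x)\<^sup>2) / n)" for n x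
  define a where "a = sqrt (c / 2)"
  have [measurable]: "Z n \<in> borel_measurable M" "A n \<in> borel_measurable M" for n
    unfolding Z_def A_def g_def by measurable
  have "(\<lambda>n. real n / real n) \<longlonglongrightarrow> 1"
    by (rule tendsto_eventually) (auto intro: eventually_gt_at_top[THEN eventually_mono])
  then have "conv_in_prob M (\<lambda>n x. (\<Sum>i<n. (X n i x)\<^sup>2) / n) 1"
    by (rule conv_in_prob_mean_square[OF order.refl])
  moreover have "isCont (\<lambda>z. g (fst z) (snd z)) (c, 1)"
    unfolding g_def by (intro continuous_intros) auto
  ultimately have "conv_in_prob M A (g c 1)"
    unfolding A_def by (rule conv_in_prob_continuous2[OF conv_in_prob_mean_square[OF p lim]]; measurable)
  moreover have "g c 1 = a"
    by (simp add: g_def a_def real_sqrt_divide field_simps)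
  ultimately have A: "conv_in_prob M A a"
    by simp
  have stat_eq: "sqrt (\<Sum>i<p n. (sqrt n * (X n i x / sqrt (\<Sum>j<n. (X n j x)\<^sup>2)) - X n i x)\<^sup>2)
      = \<bar>Z n x\<bar> * A n x" for n x
    unfolding Z_def A_def g_def by (rule sqrt_first_column_deviation_eq[OF p])
  have "weak_conv_m (\<lambda>n. distr M borel (Z n)) std_normal_distribution"
    using central_limit_centered_square by (simp add: Z_def[abs_def])
  moreover have "bounded_in_prob M Z"
    using bounded_in_prob_centered_square_sum by (simp add: Z_def[abs_def])
  ultimately show ?thesis
    unfolding stat_eq a_def[symmetric]
    by (intro weak_conv_m_abs_mult_conv_in_prob[OF _ _ real_dist_normal_dist _ _ A]; measurable)
qed

end

theorem lemma3p1:
  fixes M :: "'a measure"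
    and Y :: "nat \<Rightarrow> nat \<Rightarrow> nat \<Rightarrow> 'a \<Rightarrow> real"
    and p :: "nat \<Rightarrow> nat"
    and c :: real
  assumes "prob_space M"
    and "\<And>n. prob_space.indep_vars M (\<lambda>_. borel) (\<lambda>(i, j). Y n i j) ({..<n} \<times> {..<n})"
    and "\<And>n i j. i < n \<Longrightarrow> j < n \<Longrightarrow> distributed M lborel (Y n i j) std_normal_density"
    and "\<And>n. p n \<le> n"
    and "0 < c" and "c \<le> 1"
    and "(\<lambda>n. real (p n) / real n) \<longlonglongrightarrow> c"
  shows "weak_conv_m
           (\<lambda>n. distr M borel (\<lambda>\<omega>. sqrt (\<Sum>i<p n.
               (sqrt (real n) * gs_gamma n (\<lambda>i j. Y n i j \<omega>) i 0 - Y n i 0 \<omega>)\<^sup>2)))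
           (distr (density lborel std_normal_density) borel (\<lambda>z. sqrt (c / 2) * \<bar>z\<bar>))"
proof -
  interpret prob_space M by fact
  interpret std_normal_array M "\<lambda>n i. Y n i 0"
  proof
    show "indep_vars (\<lambda>_. borel) (\<lambda>i. Y n i 0) {..<n}" for n
      by (rule indep_vars_reindex[OF assms(2)[of n], of "\<lambda>i. (i, 0)", simplified])
         (auto simp: inj_on_def)
    show "distr M borel (Y n i 0) = std_normal_distribution" if "i < n" for n i
      using assms(3)[OF that, of 0] that unfolding distributed_def
      by (auto cong: distr_cong)
  qed
  have "gs_gamma n (\<lambda>i j. Y n i j \<omega>) i 0 = Y n i 0 \<omega> / sqrt (\<Sum>j<n. (Y n j 0 \<omega>)\<^sup>2)" for n i \<omega>
    by (simp add: gs_gamma_def vnorm_def vinner_def power2_eq_square)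
  then show ?thesis
    using weak_conv_first_column_deviation[OF assms(4,7)] by simp
qed

end
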